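(* The semi-metric space $(\mathcal D_n^+,d_s)$ is complete: every sequence $(\Delta^{(k)})_{k\ge0}$ in $\mathcal D_n^+$ such that for every $\varepsilon>0$ there is $K$ with $d_s(\Delta^{(p)},\Delta^{(q)})\le\varepsilon$ for all $p,q\ge K$ converges for $d_s$ to some $\Delta^{(\infty)}\in\mathcal D_n^+$, i.e. $d_s(\Delta^{(k)},\Delta^{(\infty)})\to0$.
   Context: $\mathcal D_n^+$ is the set of $n\times n$ diagonal matrices with positive diagonal entries, and $d_s(\Delta,\Delta')=\max_i\frac{|\Delta_i-\Delta'_i|}{\sqrt{\Delta_i\Delta'_i}}$. *)

theory Defs
  imports "HOL-Analysis.Analysis"
begin

definition pos_diag :: "(real^'n^'n) set" where
  "pos_diag = {D. (\<forall>i j. i \<noteq> j \<longrightarrow> D $ i $ j = 0) \<and> (\<forall>i. D $ i $ i > 0)}"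

definition d_s :: "real^'n^'n \<Rightarrow> real^'n^'n \<Rightarrow> real" where
  "d_s D D' = Max (range (\<lambda>i. \<bar>D $ i $ i - D' $ i $ i\<bar> / sqrt (D $ i $ i * D' $ i $ i)))"

end

theory Submission imports Defs begin

text \<open>On positive reals, |x - y| / sqrt(x y) = 2 sinh(|ln x - ln y| / 2). Hence
  d_s D D' = 2 sinh(infnorm (log_diag D - log_diag D') / 2): the map D \<mapsto> (ln D_ii)_i
  identifies (D_n^+, d_s) with R^n under the sup norm, up to the increasing homeomorphism
  t \<mapsto> 2 sinh(t/2) of [0, \<infinity>) fixing 0. Cauchy sequences and limits correspond, so
  completeness of R^n transfers to D_n^+.\<close>

definition log_diag :: "real^'n^'n \<Rightarrow> real^'n" where
  "log_diag D = (\<chi> i. ln (D $ i $ i))"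

definition exp_diag :: "real^'n \<Rightarrow> real^'n^'n" where
  "exp_diag v = (\<chi> i j. if i = j then exp (v $ i) else 0)"

lemma exp_diag_in_pos_diag: "exp_diag v \<in> pos_diag"
  by (simp add: pos_diag_def exp_diag_def)

lemma log_diag_exp_diag [simp]: "log_diag (exp_diag v) = v"
  by (simp add: log_diag_def exp_diag_def vec_eq_iff)

lemma abs_diff_div_sqrt_eq_sinh:
  fixes x y :: real
  assumes "x > 0" "y > 0"
  shows "\<bar>x - y\<bar> / sqrt (x * y) = 2 * sinh (\<bar>ln x - ln y\<bar> / 2)"
proof -
  define z where "z = sqrt (x / y)"
  have z_pos: "z > 0" using assms by (simp add: z_def)
  have "(ln x - ln y) / 2 = ln z"
    using assms by (simp add: z_def ln_sqrt ln_div)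
  then have "2 * sinh ((ln x - ln y) / 2) = z - inverse z"
    by (simp add: sinh_ln_real[OF z_pos])
  also have "\<dots> = (x - y) / sqrt (x * y)"
    using assms by (simp add: z_def real_sqrt_divide real_sqrt_mult field_simps)
  finally have "(x - y) / sqrt (x * y) = 2 * sinh ((ln x - ln y) / 2)" ..
  then have "\<bar>x - y\<bar> / sqrt (x * y) = \<bar>2 * sinh ((ln x - ln y) / 2)\<bar>"
    by (metis abs_divide abs_of_nonneg real_sqrt_ge_zero zero_le_mult_iff less_imp_le assms)
  also have "\<dots> = 2 * sinh (\<bar>ln x - ln y\<bar> / 2)"
    by (simp add: abs_mult flip: sinh_real_abs)
  finally show ?thesis .
qed

lemma d_s_eq_sinh_infnorm:
  assumes "D \<in> pos_diag" "D' \<in> pos_diag"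
  shows "d_s D D' = 2 * sinh (infnorm (log_diag D - log_diag D') / 2)"
proof -
  let ?t = "\<lambda>i. \<bar>ln (D $ i $ i) - ln (D' $ i $ i)\<bar>"
  have "d_s D D' = Max ((\<lambda>t. 2 * sinh (t / 2)) ` range ?t)"
    using assms by (simp add: d_s_def pos_diag_def abs_diff_div_sqrt_eq_sinh image_image)
  also have "\<dots> = 2 * sinh (Max (range ?t) / 2)"
    by (rule mono_Max_commute[symmetric]) (auto intro: monoI)
  also have "Max (range ?t) = infnorm (log_diag D - log_diag D')"
    by (simp add: infnorm_cart log_diag_def cSup_eq_Max full_SetCompr_eq)
  finally show ?thesis .
qed

lemma infnorm_CauchyI:
  fixes x :: "nat \<Rightarrow> 'a::euclidean_space"
  assumes "\<And>\<epsilon>. \<epsilon> > 0 \<Longrightarrow> \<exists>K. \<forall>p\<ge>K. \<forall>q\<ge>K. infnorm (x p - x q) \<le> \<epsilon>"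
  shows "Cauchy x"
proof (rule metric_CauchyI)
  fix e :: real
  assume "e > 0"
  define c where "c = sqrt DIM('a)"
  have "c > 0" by (simp add: c_def)
  with \<open>e > 0\<close> obtain K where K: "\<forall>p\<ge>K. \<forall>q\<ge>K. infnorm (x p - x q) \<le> e / (2 * c)"
    using assms[of "e / (2 * c)"] by auto
  have "dist (x p) (x q) < e" if "p \<ge> K" "q \<ge> K" for p q
  proof -
    have "dist (x p) (x q) \<le> c * infnorm (x p - x q)"
      by (simp add: dist_norm c_def norm_le_infnorm)
    also have "\<dots> \<le> c * (e / (2 * c))"
      using K that \<open>c > 0\<close> by (intro mult_left_mono) auto
    also have "\<dots> < e"
      using \<open>c > 0\<close> \<open>e > 0\<close> by simp
    finally show ?thesis .
  qed
  then show "\<exists>M. \<forall>m\<ge>M. \<forall>n\<ge>M. dist (x m) (x n) < e"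
    by blast
qed

theorem mainTheorem8:
  fixes \<Delta> :: "nat \<Rightarrow> real^'n^'n"
  assumes in_D: "\<And>k. \<Delta> k \<in> pos_diag"
    and cauchy: "\<And>\<epsilon>. \<epsilon> > 0 \<Longrightarrow> \<exists>K. \<forall>p\<ge>K. \<forall>q\<ge>K. d_s (\<Delta> p) (\<Delta> q) \<le> \<epsilon>"
  shows "\<exists>\<Delta>inf \<in> pos_diag. (\<lambda>k. d_s (\<Delta> k) \<Delta>inf) \<longlonglongrightarrow> 0"
proof -
  have "Cauchy (\<lambda>k. log_diag (\<Delta> k))"
  proof (rule infnorm_CauchyI)
    fix \<epsilon> :: real
    assume "\<epsilon> > 0"
    then obtain K where "\<forall>p\<ge>K. \<forall>q\<ge>K. d_s (\<Delta> p) (\<Delta> q) \<le> 2 * sinh (\<epsilon> / 2)"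
      using cauchy[of "2 * sinh (\<epsilon> / 2)"] by auto
    then show "\<exists>K. \<forall>p\<ge>K. \<forall>q\<ge>K. infnorm (log_diag (\<Delta> p) - log_diag (\<Delta> q)) \<le> \<epsilon>"
      by (auto simp: d_s_eq_sinh_infnorm in_D)
  qed
  then obtain v where v: "(\<lambda>k. log_diag (\<Delta> k)) \<longlonglongrightarrow> v"
    by (auto simp: Cauchy_convergent_iff convergent_def)
  have "(\<lambda>k. 2 * sinh (infnorm (log_diag (\<Delta> k) - v) / 2)) \<longlonglongrightarrow> 2 * sinh (infnorm (v - v) / 2)"
    by (intro tendsto_intros v) simp
  then have "(\<lambda>k. d_s (\<Delta> k) (exp_diag v)) \<longlonglongrightarrow> 0"
    by (simp add: d_s_eq_sinh_infnorm in_D exp_diag_in_pos_diag infnorm_0)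
  then show ?thesis
    using exp_diag_in_pos_diag by blast
qed

end
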